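(* For every integer $n\ge 0$, \[ d_{n,q}=\begin{cases} 1, & n=0,\\[4pt] \displaystyle\frac{[2]_q}{2}\frac{(-4)^n}{n!}D_{n,q}(0|1)-q\sum_{m=0}^{n-1}\frac{(-4)^{n-m-1}}{(n-m-1)!}D_{n-m-1,q}(0|1)\,C_m, & n\ge 1.\end{cases} \]
   Context: Let $p$ be a fixed odd prime, $\mathbb{C}_p$ the completion of the algebraic closure of $\mathbb{Q}_p$, with $|p|_p=1/p$. Let $q\in\mathbb{C}_p$ with $|1-q|_p<p^{-1/(p-1)}$, and $\log$ denotes the $p$-adic logarithm. Put $[x]_q=\frac{1-q^x}{1-q}$, so $[2]_q=1+q$. $C_m=\frac{1}{m+1}\binom{2m}{m}$ is the $m$-th Catalan number. The numbers $D_{n,q}(0|1)$ are defined by \[ \frac{2(q-1)+\frac{q-1}{\log q}\log(1+t)}{q^{2}(1+t)-1}=\sum_{n=0}^{\infty}D_{n,q}(0|1)\frac{t^n}{n!}. \] The $q$-analogues of the Catalan–Daehee numbers $d_{n,q}$ are defined by \[ \frac{q-1+\frac{q-1}{\log q}\cdot\frac12\log(1-4t)}{q\sqrt{1-4t}-1}=\sum_{n=0}^{\infty}d_{n,q}t^n, \] for $t\in\mathbb{C}_p$ with $|t|_p<p^{-1/(p-1)}$ (equivalently as power series in $t$). *)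

theory Defs
  imports "HOL-Computational_Algebra.Formal_Power_Series"
begin

definition q_num :: "'a::field \<Rightarrow> nat \<Rightarrow> 'a" where
  "q_num q x = (1 - q ^ x) / (1 - q)"

definition catalan :: "nat \<Rightarrow> 'a::field_char_0" where
  "catalan m = of_nat ((2*m) choose m) / of_nat (m + 1)"

text \<open>Formal power series log(1+t) is fps_ln 1; sqrt(1+t) is fps_binomial (1/2).
  The parameter L plays the role of the p-adic logarithm log q.\<close>

definition D_gf :: "'a::field_char_0 \<Rightarrow> 'a \<Rightarrow> 'a fps" where
  "D_gf q L = (fps_const (2 * (q - 1)) + fps_const ((q - 1) / L) * fps_ln 1)
              / (fps_const (q ^ 2) * (1 + fps_X) - 1)"

definition D_num :: "'a::field_char_0 \<Rightarrow> 'a \<Rightarrow> nat \<Rightarrow> 'a" where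
  "D_num q L n = fact n * fps_nth (D_gf q L) n"

definition sqrt_1m4t :: "'a::field_char_0 fps" where
  "sqrt_1m4t = fps_binomial (1/2) oo (fps_const (-4) * fps_X)"

definition log_1m4t :: "'a::field_char_0 fps" where
  "log_1m4t = fps_ln 1 oo (fps_const (-4) * fps_X)"

definition d_gf :: "'a::field_char_0 \<Rightarrow> 'a \<Rightarrow> 'a fps" where
  "d_gf q L = (fps_const (q - 1) + fps_const ((q - 1) / L) * fps_const (1/2) * log_1m4t)
              / (fps_const q * sqrt_1m4t - 1)"

definition d_num :: "'a::field_char_0 \<Rightarrow> 'a \<Rightarrow> nat \<Rightarrow> 'a" where
  "d_num q L n = fps_nth (d_gf q L) n"

end

theory Submission
  imports Defs
begin

text \<open>
  Write \<open>S = \<surd>(1 - 4t)\<close> and \<open>G(t) = D(-4t)\<close>, where \<open>D\<close> is the exponential generating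
  function of \<open>D\<^sub>n\<^sub>,\<^sub>q(0|1)\<close> read as an ordinary power series. Substituting \<open>-4t\<close> into
  \<open>D\<close> turns its denominator \<open>q\<^sup>2(1 + t) - 1\<close> into \<open>q\<^sup>2S\<^sup>2 - 1 = (qS + 1)(qS - 1)\<close> and its
  numerator into twice the numerator of the generating function of \<open>d\<^sub>n\<^sub>,\<^sub>q\<close>, so
  \<open>\<Sum> d\<^sub>n\<^sub>,\<^sub>q t\<^sup>n = (qS + 1) G / 2\<close>. Since \<open>S = 1 - 2t \<Sum> C\<^sub>m t\<^sup>m\<close>, comparing coefficients gives
  the stated convolution with the Catalan numbers.
\<close>

unbundle fps_syntax

lemma fps_X_mult_convolution_nth:
  "(fps_X * (f * g)) $ n = (\<Sum>m<n. g $ (n - m - 1) * f $ m :: 'a::comm_semiring_1)"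
  by (cases n) (simp_all add: fps_mult_nth[of f g] atLeast0AtMost lessThan_Suc_atMost mult.commute)

lemma catalan_eq_fact: "catalan m = (fact (2 * m) / (fact m * fact (Suc m)) :: 'a::field_char_0)"
  by (simp add: catalan_def binomial_fact mult_2 field_simps del: of_nat_Suc)

lemma gbinomial_half_Suc:
  "(1/2 gchoose Suc k :: 'a::field_char_0) = (- 1) ^ k * fact (2 * k) / (2 * 4 ^ k * fact k * fact (Suc k))"
proof -
  have "(1/2 gchoose Suc k :: 'a) = (- 1) ^ Suc k * pochhammer (- 1/2) (Suc k) / fact (Suc k)"
    by (simp add: gbinomial_pochhammer)
  also have "(- 1) ^ Suc k * pochhammer (- 1/2 :: 'a) (Suc k) = (- 1) ^ k * pochhammer (1/2) k / 2"
    by (simp add: pochhammer_rec)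
  also have "pochhammer (1/2 :: 'a) k = fact (2 * k) / (4 ^ k * fact k)"
    by (simp add: fact_double power_mult)
  finally show ?thesis
    by (simp add: mult.assoc del: fact_Suc)
qed

lemma gbinomial_half_Suc_catalan:
  "(- 4) ^ Suc k * (1/2 gchoose Suc k) = - 2 * (catalan k :: 'a::field_char_0)"
proof -
  have sign: "(- 4 :: 'a) ^ Suc k * (- 1) ^ k = - 4 * 4 ^ k"
    by (simp only: power_Suc mult.assoc flip: power_mult_distrib) simp
  have "(- 4) ^ Suc k * (1/2 gchoose Suc k)
      = ((- 4) ^ Suc k * (- 1) ^ k) * fact (2 * k) / (2 * 4 ^ k * fact k * fact (Suc k) :: 'a)"
    by (simp only: gbinomial_half_Suc times_divide_eq_right mult.assoc)
  also have "\<dots> = - 2 * (fact (2 * k) / (fact k * fact (Suc k)))"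
    unfolding sign by (simp add: divide_simps del: fact_Suc)
  finally show ?thesis
    by (simp only: catalan_eq_fact)
qed

lemma q_num_2: "q \<noteq> 1 \<Longrightarrow> q_num q 2 = 1 + q"
  by (simp add: q_num_def power2_eq_square field_simps)

lemma sqrt_1m4t_power2: "sqrt_1m4t ^ 2 = 1 + fps_const (- 4) * (fps_X :: 'a::field_char_0 fps)"
proof -
  have "(sqrt_1m4t :: 'a fps) ^ 2 = fps_binomial (1/2) ^ 2 oo fps_const (- 4) * fps_X"
    unfolding sqrt_1m4t_def by (simp add: fps_compose_power)
  also have "fps_binomial (1/2) ^ 2 = (fps_binomial 1 :: 'a fps)"
    by (simp add: power2_eq_square flip: fps_binomial_add_mult)
  finally show ?thesis
    by (simp add: fps_binomial_1 fps_compose_add_distrib)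
qed

lemma sqrt_1m4t_catalan: "sqrt_1m4t = 1 - fps_const 2 * fps_X * Abs_fps (catalan :: nat \<Rightarrow> 'a::field_char_0)"
proof (rule fps_ext)
  fix n
  show "sqrt_1m4t $ n = (1 - fps_const 2 * fps_X * Abs_fps catalan :: 'a fps) $ n"
  proof (cases n)
    case 0
    then show ?thesis by (simp add: sqrt_1m4t_def)
  next
    case (Suc k)
    then have "(sqrt_1m4t :: 'a fps) $ n = (- 4) ^ Suc k * (1/2 gchoose Suc k)"
      by (simp add: sqrt_1m4t_def fps_compose_linear)
    also have "\<dots> = - 2 * catalan k"
      by (rule gbinomial_half_Suc_catalan)
    finally show ?thesis
      using Suc by (simp add: mult.assoc)
  qed
qed

lemma half_q_sqrt_1m4t_plus_1:
  "fps_const (1/2) * (fps_const q * sqrt_1m4t + 1)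
    = fps_const ((1 + q) / 2) - fps_const (q :: 'a::field_char_0) * fps_X * Abs_fps catalan"
proof -
  have "fps_const (1/2) * (fps_const q * sqrt_1m4t + 1)
      = fps_const (1/2) * (fps_const q + 1) - fps_const (1/2) * fps_const 2 * fps_const q * fps_X * Abs_fps catalan"
    unfolding sqrt_1m4t_catalan by algebra
  also have "fps_const (1/2) * (fps_const q + 1) = fps_const ((1 + q) / 2)"
    by (simp only: fps_const_1_eq_1[symmetric] fps_const_add fps_const_mult) (simp add: add.commute)
  also have "fps_const (1/2) * fps_const 2 = (1 :: 'a fps)"
    by (simp only: fps_const_mult) simp
  finally show ?thesis
    by simp
qed

lemma D_gf_compose_nth:
  "(D_gf q L oo fps_const (- 4) * fps_X) $ k = (- 4) ^ k / fact k * D_num q L k"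
  by (simp add: fps_compose_linear D_num_def)

lemma D_num_0:
  assumes "q\<^sup>2 \<noteq> 1"
  shows "D_num q L 0 = 2 / (1 + q)"
proof -
  have "1 + q \<noteq> 0"
    using assms by (auto simp: power2_eq_1_iff add_eq_0_iff)
  moreover have "q\<^sup>2 - 1 = (q - 1) * (1 + q)"
    by (simp add: power2_eq_square algebra_simps)
  ultimately show ?thesis
    using assms by (simp add: D_num_def D_gf_def fps_divide_unit field_simps)
qed

lemma d_gf_conv_D_gf:
  fixes q L :: "'a::field_char_0"
  assumes "q\<^sup>2 \<noteq> 1"
  shows "d_gf q L = fps_const (1/2) * (fps_const q * sqrt_1m4t + 1) * (D_gf q L oo fps_const (- 4) * fps_X)"
proof -
  define c :: "'a fps" where "c = fps_const (- 4) * fps_X"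
  define S :: "'a fps" where "S = sqrt_1m4t"
  define N :: "'a fps" where "N = fps_const (2 * (q - 1)) + fps_const ((q - 1) / L) * fps_ln 1"
  define Dn :: "'a fps" where "Dn = fps_const (q\<^sup>2) * (1 + fps_X) - 1"
  have c0: "c $ 0 = 0"
    by (simp add: c_def)
  have "q \<noteq> 1"
    using assms by auto
  then have unit: "is_unit Dn" "is_unit (fps_const q * S - 1)"
    using assms by (simp_all add: Dn_def S_def sqrt_1m4t_def)
  have "N / Dn = D_gf q L"
    by (simp add: D_gf_def N_def Dn_def)
  then have "N = D_gf q L * Dn"
    by (simp add: unit_eq_div1[OF unit(1)])
  then have "N oo c = (D_gf q L oo c) * (Dn oo c)"
    by (simp add: fps_compose_mult_distrib[OF c0])
  also have "Dn oo c = fps_const (q\<^sup>2) * S\<^sup>2 - 1"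
    by (simp add: Dn_def S_def c_def sqrt_1m4t_power2 fps_compose_sub_distrib fps_compose_mult_distrib
        fps_compose_add_distrib)
  also have "\<dots> = (fps_const q * S + 1) * (fps_const q * S - 1)"
    by (simp add: algebra_simps power2_eq_square flip: fps_const_mult)
  finally have N_compose: "N oo c = (D_gf q L oo c) * ((fps_const q * S + 1) * (fps_const q * S - 1))" .
  have "fps_const (q - 1) = fps_const (1/2) * fps_const (2 * (q - 1))"
    unfolding fps_const_mult by (rule arg_cong[where f = fps_const]) simp
  then have "fps_const (q - 1) + fps_const ((q - 1) / L) * fps_const (1/2) * log_1m4t
      = fps_const (1/2) * (N oo c)"
    by (simp add: N_def log_1m4t_def c_def fps_compose_add_distrib fps_compose_mult_distrib algebra_simps)
  also have "\<dots> = fps_const (1/2) * (fps_const q * S + 1) * (D_gf q L oo c) * (fps_const q * S - 1)"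
    unfolding N_compose by (simp only: mult_ac)
  finally show ?thesis
    unfolding d_gf_def S_def[symmetric] c_def[symmetric] unit_eq_div1[OF unit(2)] .
qed

lemma d_num_eq_convolution:
  fixes q L :: "'a::field_char_0"
  assumes "q\<^sup>2 \<noteq> 1"
  shows "d_num q L n = (1 + q) / 2 * (- 4) ^ n / fact n * D_num q L n
    - q * (\<Sum>m<n. (- 4) ^ (n - m - 1) / fact (n - m - 1) * D_num q L (n - m - 1) * catalan m)"
proof -
  define G :: "'a fps" where "G = D_gf q L oo fps_const (- 4) * fps_X"
  have "d_gf q L = fps_const ((1 + q) / 2) * G - fps_const q * (fps_X * (Abs_fps catalan * G))"
    unfolding d_gf_conv_D_gf[OF assms] half_q_sqrt_1m4t_plus_1 G_def[symmetric]
    by (simp add: left_diff_distrib mult.assoc)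
  then have "d_num q L n = (1 + q) / 2 * G $ n - q * (fps_X * (Abs_fps catalan * G)) $ n"
    by (simp add: d_num_def)
  then show ?thesis
    unfolding fps_X_mult_convolution_nth G_def D_gf_compose_nth by (simp add: mult_ac)
qed

theorem theorem1:
  fixes q L :: "'a::field_char_0" and n :: nat
  assumes "q \<noteq> 1" and "q \<noteq> -1" and "L \<noteq> 0"
  shows "d_num q L n =
    (if n = 0 then 1
     else q_num q 2 / 2 * (-4) ^ n / fact n * D_num q L n
          - q * (\<Sum>m<n. (-4) ^ (n - m - 1) / fact (n - m - 1) * D_num q L (n - m - 1) * catalan m))"
proof -
  have q2: "q\<^sup>2 \<noteq> 1"
    using assms(1,2) by (simp add: power2_eq_1_iff)
  have "1 + q \<noteq> 0"
    using assms(2) by (simp add: add_eq_0_iff)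
  then have "(1 + q) / 2 * D_num q L 0 = 1"
    unfolding D_num_0[OF q2]
    by (simp only: times_divide_times_eq mult.commute[of "1 + q"] divide_self_if mult_eq_0_iff) simp
  then show ?thesis
    by (simp add: d_num_eq_convolution[OF q2] q_num_2[OF assms(1)])
qed

end
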